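(* There is an absolute constant $C>0$ such that every Boolean matrix $F\in\{0,1\}^{\mathcal X\times\mathcal Y}$ (with $\mathcal X,\mathcal Y$ finite nonempty) satisfies $\log_2\!\big(1/\mathrm{wrect}(F)\big)\le C\cdot \mathsf{N}(F)$; that is, $\mathsf{N}(F)\gtrsim \log(1/\mathrm{wrect}(F))$.
   Context: A combinatorial rectangle is a set $S\times T$ with $S\subseteq\mathcal X$, $T\subseteq\mathcal Y$; it is monochromatic in $F$ if $F$ is constant on it. The weighted rectangle ratio is $\mathrm{wrect}(F)=\inf_{\mu}\max_R \mu(R)$, where the infimum is over all product probability measures $\mu=\mu_{\mathcal X}\times\mu_{\mathcal Y}$ on $\mathcal X\times\mathcal Y$ and the maximum is over monochromatic rectangles $R$ of $F$. A deterministic protocol is a binary tree in which each internal node is owned by Alice (labelled by a function $\mathcal X\to\{0,1\}$) or Bob (labelled by a function $\mathcal Y\to\{0,1\}$); on input $(x,y)$ the players follow the path determined by these bits, and the leaf reached gives the output in $\{0,1\}$; its cost is the tree height. A nondeterministic protocol consists of a family of deterministic protocols $\pi_a$ indexed by advice strings $a$ of some length $k$; it computes $F$ if for all $(x,y)$: $F(x,y)=1$ iff there exists $a$ with $\pi_a(x,y)=1$. Its cost is $k$ plus the maximum cost of $\pi_a$ over all $a$. $\mathsf{N}(F)$ is the minimum cost of a nondeterministic protocol computing $F$. Logarithms are base 2. *)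

theory Defs
  imports Complex_Main
begin

text \<open>Inputs are drawn from finite nonempty carriers X, Y of natural numbers
(every finite set embeds into nat, so this is no loss of generality and lets the
constant C be quantified outside all instances).\<close>

definition prob_dist :: "nat set \<Rightarrow> (nat \<Rightarrow> real) \<Rightarrow> bool" where
  "prob_dist X p \<longleftrightarrow> (\<forall>x\<in>X. 0 \<le> p x) \<and> sum p X = 1"

definition mono_rect :: "nat set \<Rightarrow> nat set \<Rightarrow> (nat \<Rightarrow> nat \<Rightarrow> bool) \<Rightarrow> nat set \<Rightarrow> nat set \<Rightarrow> bool" where
  "mono_rect X Y F S T \<longleftrightarrow> S \<subseteq> X \<and> T \<subseteq> Y \<and> (\<exists>c. \<forall>x\<in>S. \<forall>y\<in>T. F x y = c)"

definition wrect :: "nat set \<Rightarrow> nat set \<Rightarrow> (nat \<Rightarrow> nat \<Rightarrow> bool) \<Rightarrow> real" where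
  "wrect X Y F = Inf {Max {sum p S * sum q T | S T. mono_rect X Y F S T} | p q.
                        prob_dist X p \<and> prob_dist Y q}"

datatype proto = Leaf bool
  | Alice "nat \<Rightarrow> bool" proto proto
  | Bob "nat \<Rightarrow> bool" proto proto

fun run :: "proto \<Rightarrow> nat \<Rightarrow> nat \<Rightarrow> bool" where
  "run (Leaf b) x y = b"
| "run (Alice f l r) x y = (if f x then run r x y else run l x y)"
| "run (Bob g l r) x y = (if g y then run r x y else run l x y)"

fun height :: "proto \<Rightarrow> nat" where
  "height (Leaf b) = 0"
| "height (Alice f l r) = Suc (max (height l) (height r))"
| "height (Bob g l r) = Suc (max (height l) (height r))"

text \<open>A nondeterministic protocol: family of deterministic protocols indexed by
advice strings of length k.\<close>
definition nd_computes :: "nat set \<Rightarrow> nat set \<Rightarrow> (nat \<Rightarrow> nat \<Rightarrow> bool) \<Rightarrow> nat \<Rightarrow> (bool list \<Rightarrow> proto) \<Rightarrow> bool" where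
  "nd_computes X Y F k \<pi> \<longleftrightarrow>
     (\<forall>x\<in>X. \<forall>y\<in>Y. F x y \<longleftrightarrow> (\<exists>a. length a = k \<and> run (\<pi> a) x y))"

definition nd_cost :: "nat \<Rightarrow> (bool list \<Rightarrow> proto) \<Rightarrow> nat" where
  "nd_cost k \<pi> = k + Max ((\<lambda>a. height (\<pi> a)) ` {a. length a = k})"

definition NCC :: "nat set \<Rightarrow> nat set \<Rightarrow> (nat \<Rightarrow> nat \<Rightarrow> bool) \<Rightarrow> nat" where
  "NCC X Y F = (LEAST c. \<exists>k \<pi>. nd_computes X Y F k \<pi> \<and> c = nd_cost k \<pi>)"

end

theory Submission
  imports Defs
begin

(* A nondeterministic protocol of cost c covers the 1-entries of F by at most 2^c combinatorial
   rectangles, one for each accepting leaf of each advice tree. Fix product distributions p, q and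
   put eps = 1 / (4 * 2^c). If some covering rectangle has p-mass and q-mass above eps, it is a
   1-monochromatic rectangle of measure at least eps^2. Otherwise every covering rectangle is thin
   on one side; deleting the thin sides from X and from Y removes at most 2^c * eps = 1/4 of each
   mass, and what remains is a 0-monochromatic rectangle of measure at least 9/16. Hence
   wrect F >= 1 / (16 * 4^c), so log (1 / wrect F) <= 2c + 4 <= 6c when c >= 1; when c = 0,
   F is constant and wrect F = 1. *)

lemma sum_UN_le:
  fixes g :: "'a \<Rightarrow> 'b::ordered_comm_monoid_add"
  assumes "finite I" and "\<And>i. i \<in> I \<Longrightarrow> finite (A i)" and "\<And>x. x \<in> (\<Union>i\<in>I. A i) \<Longrightarrow> 0 \<le> g x"
  shows "sum g (\<Union>i\<in>I. A i) \<le> (\<Sum>i\<in>I. sum g (A i))"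
proof -
  have "(\<Union>i\<in>I. A i) = snd ` Sigma I A" by force
  then have "sum g (\<Union>i\<in>I. A i) \<le> sum (g \<circ> snd) (Sigma I A)"
    using assms sum_image_le[of "Sigma I A" g snd] by auto
  also have "\<dots> = (\<Sum>i\<in>I. sum g (A i))"
    using assms by (simp add: sum.Sigma split_def)
  finally show ?thesis .
qed

definition restrict_rects :: "'a set \<Rightarrow> 'b set \<Rightarrow> ('a set \<times> 'b set) set \<Rightarrow> ('a set \<times> 'b set) set" where
  "restrict_rects A B R = (\<lambda>(S, T). (S \<inter> A, T \<inter> B)) ` R"

lemma bex_restrict_rects_iff:
  "(\<exists>(S, T) \<in> restrict_rects A B R. x \<in> S \<and> y \<in> T) \<longleftrightarrow>
     x \<in> A \<and> y \<in> B \<and> (\<exists>(S, T) \<in> R. x \<in> S \<and> y \<in> T)"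
  unfolding restrict_rects_def by (simp add: split_def) blast

lemma finite_restrict_rects: "finite R \<Longrightarrow> finite (restrict_rects A B R)"
  by (simp add: restrict_rects_def)

lemma card_restrict_rects_le: "finite R \<Longrightarrow> card R \<le> n \<Longrightarrow> card (restrict_rects A B R) \<le> n"
  unfolding restrict_rects_def using card_image_le order_trans by blast

fun accepting_rects :: "proto \<Rightarrow> (nat set \<times> nat set) set" where
  "accepting_rects (Leaf b) = (if b then {(UNIV, UNIV)} else {})"
| "accepting_rects (Alice f l r) =
     restrict_rects {x. \<not> f x} UNIV (accepting_rects l) \<union> restrict_rects {x. f x} UNIV (accepting_rects r)"
| "accepting_rects (Bob g l r) =
     restrict_rects UNIV {y. \<not> g y} (accepting_rects l) \<union> restrict_rects UNIV {y. g y} (accepting_rects r)"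

lemma run_iff_accepting_rects: "run \<pi> x y \<longleftrightarrow> (\<exists>(S, T) \<in> accepting_rects \<pi>. x \<in> S \<and> y \<in> T)"
  by (induction \<pi>) (simp_all add: bex_Un bex_restrict_rects_iff)

lemma finite_accepting_rects: "finite (accepting_rects \<pi>)"
  by (induction \<pi>) (simp_all add: finite_restrict_rects)

lemma card_Un_le_pow2:
  assumes "card A \<le> 2 ^ a" "card B \<le> 2 ^ b"
  shows "card (A \<union> B) \<le> 2 * 2 ^ max a b"
proof -
  have "(2::nat) ^ a \<le> 2 ^ max a b" "(2::nat) ^ b \<le> 2 ^ max a b" by (simp_all add: power_increasing)
  then show ?thesis using assms card_Un_le[of A B] by linarith
qed

lemma card_accepting_rects_le: "card (accepting_rects \<pi>) \<le> 2 ^ height \<pi>"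
  by (induction \<pi>) (simp_all add: card_Un_le_pow2 card_restrict_rects_le finite_accepting_rects)


lemma sum_diff_UN_ge:
  fixes p :: "'a \<Rightarrow> real" and \<epsilon> :: real
  assumes "finite X" and "\<And>x. x \<in> X \<Longrightarrow> 0 \<le> p x" and "finite I"
    and "\<And>i. i \<in> I \<Longrightarrow> sum p (X \<inter> A i) \<le> \<epsilon>"
  shows "sum p X - real (card I) * \<epsilon> \<le> sum p (X - (\<Union>i\<in>I. A i))"
proof -
  have "sum p (X \<inter> (\<Union>i\<in>I. A i)) \<le> (\<Sum>i\<in>I. sum p (X \<inter> A i))"
    unfolding Int_UN_distrib using assms(1-3) by (intro sum_UN_le) auto
  also have "\<dots> \<le> (\<Sum>i\<in>I. \<epsilon>)" by (rule sum_mono) (rule assms(4))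
  finally have "sum p (X \<inter> (\<Union>i\<in>I. A i)) \<le> real (card I) * \<epsilon>" by simp
  moreover have "X - (\<Union>i\<in>I. A i) = X - X \<inter> (\<Union>i\<in>I. A i)" by blast
  then have "sum p (X - (\<Union>i\<in>I. A i)) = sum p X - sum p (X \<inter> (\<Union>i\<in>I. A i))"
    using assms(1) by (simp add: sum_diff)
  ultimately show ?thesis by linarith
qed

lemma large_mono_rect_of_cover:
  assumes X: "finite X" "prob_dist X p" and Y: "finite Y" "prob_dist Y q"
    and R: "finite R" "card R \<le> n" and "n \<ge> 1"
    and cover: "\<forall>x\<in>X. \<forall>y\<in>Y. F x y \<longleftrightarrow> (\<exists>(S, T) \<in> R. x \<in> S \<and> y \<in> T)"
  shows "\<exists>S T. mono_rect X Y F S T \<and> 1 / (16 * real n ^ 2) \<le> sum p S * sum q T"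
proof -
  define \<epsilon> where "\<epsilon> = 1 / (4 * real n)"
  have "\<epsilon> > 0" using \<open>n \<ge> 1\<close> by (simp add: \<epsilon>_def)
  have thin_total: "real m * \<epsilon> \<le> 1 / 4" if "m \<le> n" for m
    using that \<open>n \<ge> 1\<close> by (simp add: \<epsilon>_def field_simps)
  show ?thesis
  proof (cases "\<exists>(S, T) \<in> R. \<epsilon> < sum p (X \<inter> S) \<and> \<epsilon> < sum q (Y \<inter> T)")
    case True
    then obtain S T where "(S, T) \<in> R" and fat: "\<epsilon> < sum p (X \<inter> S)" "\<epsilon> < sum q (Y \<inter> T)"
      by blast
    then have "mono_rect X Y F (X \<inter> S) (Y \<inter> T)"
      using cover unfolding mono_rect_def by (intro conjI exI[of _ True]) auto
    moreover have "\<epsilon> * \<epsilon> \<le> sum p (X \<inter> S) * sum q (Y \<inter> T)"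
      using fat \<open>\<epsilon> > 0\<close> by (intro mult_mono) auto
    moreover have "\<epsilon> * \<epsilon> = 1 / (16 * real n ^ 2)" by (simp add: \<epsilon>_def power2_eq_square)
    ultimately show ?thesis by metis
  next
    case False
    define I where "I = {(S, T) \<in> R. sum p (X \<inter> S) \<le> \<epsilon>}"
    define A where "A = X - (\<Union>i\<in>I. fst i)"
    define B where "B = Y - (\<Union>i\<in>R - I. snd i)"
    have "mono_rect X Y F A B"
      using cover unfolding mono_rect_def A_def B_def
      by (intro conjI exI[of _ False]) (fastforce simp: I_def)+
    have "I \<subseteq> R" by (auto simp: I_def)
    then have "finite I" "card I \<le> n" "card (R - I) \<le> n"
      using R by (auto intro: finite_subset order.trans[OF card_mono])
    have "sum p X - real (card I) * \<epsilon> \<le> sum p A"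
      unfolding A_def using X \<open>finite I\<close> by (intro sum_diff_UN_ge) (auto simp: prob_dist_def I_def)
    then have "3 / 4 \<le> sum p A"
      using X thin_total[OF \<open>card I \<le> n\<close>] by (simp add: prob_dist_def)
    have "sum q Y - real (card (R - I)) * \<epsilon> \<le> sum q B"
      unfolding B_def using Y R False by (intro sum_diff_UN_ge) (auto simp: prob_dist_def I_def)
    then have "3 / 4 \<le> sum q B"
      using Y thin_total[OF \<open>card (R - I) \<le> n\<close>] by (simp add: prob_dist_def)
    have "1 \<le> real n ^ 2" using \<open>n \<ge> 1\<close> by simp
    then have "1 / (16 * real n ^ 2) \<le> 3 / 4 * (3 / 4)" by (simp add: divide_le_eq)
    also have "\<dots> \<le> sum p A * sum q B"
      using \<open>3 / 4 \<le> sum p A\<close> \<open>3 / 4 \<le> sum q B\<close> by (intro mult_mono) auto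
    finally show ?thesis using \<open>mono_rect X Y F A B\<close> by blast
  qed
qed

lemma finite_mono_rect_measures:
  assumes "finite X" "finite Y"
  shows "finite {sum p S * sum q T | S T. mono_rect X Y F S T}"
proof -
  have "{sum p S * sum q T | S T. mono_rect X Y F S T} \<subseteq> (\<lambda>(S, T). sum p S * sum q T) ` (Pow X \<times> Pow Y)"
    by (auto simp: mono_rect_def)
  then show ?thesis using assms by (meson finite_Pow_iff finite_SigmaI finite_imageI finite_subset)
qed

lemma wrect_lower_bound:
  assumes "finite X" "X \<noteq> {}" "finite Y" "Y \<noteq> {}"
    and large: "\<And>p q. prob_dist X p \<Longrightarrow> prob_dist Y q \<Longrightarrow>
                  \<exists>S T. mono_rect X Y F S T \<and> \<beta> \<le> sum p S * sum q T"
  shows "\<beta> \<le> wrect X Y F"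
  unfolding wrect_def
proof (rule cInf_greatest)
  have "prob_dist X (\<lambda>_. 1 / real (card X))" "prob_dist Y (\<lambda>_. 1 / real (card Y))"
    using assms by (simp_all add: prob_dist_def)
  then show "{Max {sum p S * sum q T | S T. mono_rect X Y F S T} | p q.
               prob_dist X p \<and> prob_dist Y q} \<noteq> {}" by blast
next
  fix v assume "v \<in> {Max {sum p S * sum q T | S T. mono_rect X Y F S T} | p q.
                        prob_dist X p \<and> prob_dist Y q}"
  then obtain p q where pq: "prob_dist X p" "prob_dist Y q"
    and v: "v = Max {sum p S * sum q T | S T. mono_rect X Y F S T}" by blast
  obtain S T where "mono_rect X Y F S T" "\<beta> \<le> sum p S * sum q T" using large[OF pq] by blast
  then show "\<beta> \<le> v"
    unfolding v using finite_mono_rect_measures[OF \<open>finite X\<close> \<open>finite Y\<close>]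
    by (blast intro: order.trans[OF _ Max_ge])
qed

lemma log_inverse_le:
  assumes "1 < b" "0 < \<beta>" "\<beta> \<le> w"
  shows "log b (1 / w) \<le> log b (1 / \<beta>)"
  using assms by (simp add: log_divide)

lemma log_inverse_wrect_le_of_cover:
  assumes "finite X" "X \<noteq> {}" "finite Y" "Y \<noteq> {}"
    and "finite R" "card R \<le> 2 ^ c"
    and "\<forall>x\<in>X. \<forall>y\<in>Y. F x y \<longleftrightarrow> (\<exists>(S, T) \<in> R. x \<in> S \<and> y \<in> T)"
  shows "log 2 (1 / wrect X Y F) \<le> 2 * c + 4"
proof -
  have "1 / (16 * (2 ^ c) ^ 2) \<le> wrect X Y F"
    using assms large_mono_rect_of_cover[where n = "2 ^ c"] by (intro wrect_lower_bound) auto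
  then have "log 2 (1 / wrect X Y F) \<le> log 2 (1 / (1 / (16 * (2 ^ c) ^ 2)))"
    by (intro log_inverse_le) auto
  also have "1 / (1 / (16 * (2 ^ c) ^ 2)) = (2::real) ^ (2 * c + 4)"
    by (simp add: power_add power_mult[symmetric] mult.commute)
  also have "log 2 ((2::real) ^ (2 * c + 4)) = 2 * c + 4"
    by (simp add: log_nat_power)
  finally show ?thesis by simp
qed

lemma wrect_ge_one_if_constant:
  assumes "finite X" "X \<noteq> {}" "finite Y" "Y \<noteq> {}" and "\<forall>x\<in>X. \<forall>y\<in>Y. F x y = b"
  shows "1 \<le> wrect X Y F"
proof (rule wrect_lower_bound[OF assms(1-4)])
  fix p q assume "prob_dist X p" "prob_dist Y q"
  then have "sum p X * sum q Y = 1" by (simp add: prob_dist_def)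
  moreover have "mono_rect X Y F X Y" using assms(5) by (auto simp: mono_rect_def)
  ultimately show "\<exists>S T. mono_rect X Y F S T \<and> 1 \<le> sum p S * sum q T" by force
qed

fun lookup_row :: "(nat \<Rightarrow> bool) \<Rightarrow> nat list \<Rightarrow> proto" where
  "lookup_row g [] = Leaf False"
| "lookup_row g (y # ys) = Bob (\<lambda>v. v = y) (lookup_row g ys) (Leaf (g y))"

fun lookup_table :: "(nat \<Rightarrow> nat \<Rightarrow> bool) \<Rightarrow> nat list \<Rightarrow> nat list \<Rightarrow> proto" where
  "lookup_table F [] ys = Leaf False"
| "lookup_table F (x # xs) ys = Alice (\<lambda>u. u = x) (lookup_table F xs ys) (lookup_row (F x) ys)"

lemma run_lookup_row: "y \<in> set ys \<Longrightarrow> run (lookup_row g ys) x y = g y"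
  by (induction ys) auto

lemma run_lookup_table: "x \<in> set xs \<Longrightarrow> y \<in> set ys \<Longrightarrow> run (lookup_table F xs ys) x y = F x y"
  by (induction xs) (auto simp: run_lookup_row)

lemma NCC_attained:
  assumes "finite X" "finite Y"
  shows "\<exists>k \<pi>. nd_computes X Y F k \<pi> \<and> NCC X Y F = nd_cost k \<pi>"
proof -
  obtain xs ys where "set xs = X" "set ys = Y" using assms finite_list by metis
  then have "nd_computes X Y F 0 (\<lambda>_. lookup_table F xs ys)"
    by (auto simp: nd_computes_def run_lookup_table)
  then have "\<exists>c k \<pi>. nd_computes X Y F k \<pi> \<and> c = nd_cost k \<pi>" by blast
  then show ?thesis unfolding NCC_def by (rule LeastI_ex)
qed

lemma nd_computes_cover:
  assumes "nd_computes X Y F k \<pi>"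
  shows "\<exists>R. finite R \<and> card R \<le> 2 ^ nd_cost k \<pi> \<and>
             (\<forall>x\<in>X. \<forall>y\<in>Y. F x y \<longleftrightarrow> (\<exists>(S, T) \<in> R. x \<in> S \<and> y \<in> T))"
proof (intro exI conjI)
  define L where "L = {a :: bool list. length a = k}"
  define h where "h = Max ((\<lambda>a. height (\<pi> a)) ` L)"
  have "finite L" "card L = 2 ^ k"
    using finite_lists_length_eq[of "UNIV :: bool set" k] card_lists_length_eq[of "UNIV :: bool set" k]
    by (simp_all add: L_def)
  then have "height (\<pi> a) \<le> h" if "a \<in> L" for a using that by (simp add: h_def)
  let ?R = "\<Union>a\<in>L. accepting_rects (\<pi> a)"
  show "finite ?R" using \<open>finite L\<close> by (simp add: finite_accepting_rects)
  have "card ?R \<le> (\<Sum>a\<in>L. card (accepting_rects (\<pi> a)))" by (rule card_UN_le[OF \<open>finite L\<close>])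
  also have "\<dots> \<le> (\<Sum>a\<in>L. 2 ^ h)"
    using \<open>\<And>a. a \<in> L \<Longrightarrow> height (\<pi> a) \<le> h\<close>
    by (intro sum_mono order.trans[OF card_accepting_rects_le] power_increasing) auto
  also have "\<dots> = 2 ^ nd_cost k \<pi>"
    using \<open>card L = 2 ^ k\<close> by (simp add: nd_cost_def h_def L_def power_add)
  finally show "card ?R \<le> 2 ^ nd_cost k \<pi>" .
  show "\<forall>x\<in>X. \<forall>y\<in>Y. F x y \<longleftrightarrow> (\<exists>(S, T) \<in> ?R. x \<in> S \<and> y \<in> T)"
    using assms by (auto simp: nd_computes_def L_def run_iff_accepting_rects)
qed

lemma nd_cost_zero_constant:
  assumes "nd_computes X Y F k \<pi>" and "nd_cost k \<pi> = 0"
  shows "\<exists>b. \<forall>x\<in>X. \<forall>y\<in>Y. F x y = b"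
proof -
  have "k = 0" and "height (\<pi> []) = 0" using assms(2) by (auto simp: nd_cost_def)
  then obtain b where "\<pi> [] = Leaf b" by (cases "\<pi> []") auto
  then show ?thesis using assms(1) \<open>k = 0\<close> by (auto simp: nd_computes_def)
qed

theorem proposition4p1:
  shows "\<exists>C>0. \<forall>(X::nat set) (Y::nat set) (F::nat \<Rightarrow> nat \<Rightarrow> bool).
           finite X \<and> X \<noteq> {} \<and> finite Y \<and> Y \<noteq> {} \<longrightarrow>
           log 2 (1 / wrect X Y F) \<le> C * real (NCC X Y F)"
proof (intro exI[of _ 6] conjI allI impI)
  fix X Y :: "nat set" and F :: "nat \<Rightarrow> nat \<Rightarrow> bool"
  assume XY: "finite X \<and> X \<noteq> {} \<and> finite Y \<and> Y \<noteq> {}"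
  then obtain k \<pi> where \<pi>: "nd_computes X Y F k \<pi>" and N: "NCC X Y F = nd_cost k \<pi>"
    using NCC_attained by blast
  show "log 2 (1 / wrect X Y F) \<le> 6 * real (NCC X Y F)"
  proof (cases "NCC X Y F = 0")
    case True
    then have "1 \<le> wrect X Y F"
      using XY nd_cost_zero_constant[OF \<pi>] N wrect_ge_one_if_constant by metis
    then show ?thesis using log_inverse_le[of 2 1] True by simp
  next
    case False
    obtain R where "finite R" "card R \<le> 2 ^ NCC X Y F"
      and "\<forall>x\<in>X. \<forall>y\<in>Y. F x y \<longleftrightarrow> (\<exists>(S, T) \<in> R. x \<in> S \<and> y \<in> T)"
      using nd_computes_cover[OF \<pi>] N by auto
    then have "log 2 (1 / wrect X Y F) \<le> 2 * NCC X Y F + 4"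
      using XY by (intro log_inverse_wrect_le_of_cover) auto
    then show ?thesis using False by simp
  qed
qed simp

end
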